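(* Let $d\geq 1$ and let $\mathcal{F}$ be a sample of the wired uniform spanning forest of $\mathbb{Z}^d$. Let $H$ be a (possibly infinite) set of edges of $\mathbb{Z}^d$ that does not contain a cycle. Then there is an ordering $\{e_n\}_{n\geq 1}$ of $H$ such that for all $n\geq 1$ and any partition of $\{e_1,\dots,e_{n-1}\}$ into two sets $A$ and $B$ we have $$\mathbb{P}\big(e_n\in\mathcal{F}\ \big|\ A\subseteq\mathcal{F},\ B\cap\mathcal{F}=\emptyset\big)\geq\frac{1}{2d}.$$
   Context: The wired uniform spanning forest (WUSF) of $\mathbb{Z}^d$ is the weak limit of uniform spanning trees on an exhaustion of $\mathbb{Z}^d$ with wired boundary conditions. *)

theory Defs
  imports "HOL-Probability.Probability"
begin

(* Vertices of Z^d are elements of int ^ 'd (d = CARD('d) >= 1).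
   Edges are unordered pairs {x,y} of vertices at l1-distance 1. *)

definition zd_edges :: "(int ^ 'd) set set" where
  "zd_edges = {{x, y} | x y. (\<Sum>i\<in>UNIV. \<bar>x $ i - y $ i\<bar>) = 1}"

(* Graph relation induced by an edge set T, after mapping vertices through f
   (f = id for Z^d itself; f = quotient map for wired graphs). *)
definition graph_rel :: "('v \<Rightarrow> 'w) \<Rightarrow> 'v set set \<Rightarrow> ('w \<times> 'w) set" where
  "graph_rel f T = {(f u, f v) | u v. {u, v} \<in> T}"

definition acyclic_via :: "('v \<Rightarrow> 'w) \<Rightarrow> 'v set set \<Rightarrow> bool" where
  "acyclic_via f T \<longleftrightarrow>
     (\<forall>u v. {u, v} \<in> T \<longrightarrow> (f u, f v) \<notin> (graph_rel f (T - {{u, v}}))\<^sup>*)"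

definition zbox :: "nat \<Rightarrow> (int ^ 'd) set" where
  "zbox n = {x. \<forall>i. \<bar>x $ i\<bar> \<le> int n}"

(* Edges of the wired graph G_n^W: edges of Z^d with at least one endpoint in the zbox *)
definition wired_edges :: "nat \<Rightarrow> (int ^ 'd) set set" where
  "wired_edges n = {e \<in> zd_edges. e \<inter> zbox n \<noteq> {}}"

(* Quotient map: all vertices outside the zbox are identified to the single vertex None *)
definition wq :: "nat \<Rightarrow> int ^ 'd \<Rightarrow> (int ^ 'd) option" where
  "wq n x = (if x \<in> zbox n then Some x else None)"

(* Spanning trees of the wired graph G_n^W (a multigraph on zbox n plus one boundary vertex):
   connected spanning and acyclic edge sets *)
definition wired_spanning_trees :: "nat \<Rightarrow> (int ^ 'd) set set set" where
  "wired_spanning_trees n =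
     {T. T \<subseteq> wired_edges n
         \<and> (\<forall>x\<in>zbox n. (Some x, None) \<in> (graph_rel (wq n) T)\<^sup>*)
         \<and> acyclic_via (wq n) T}"

definition wired_ust_prob :: "nat \<Rightarrow> (int ^ 'd) set set \<Rightarrow> (int ^ 'd) set set \<Rightarrow> real" where
  "wired_ust_prob n S A =
     real (card {T \<in> wired_spanning_trees n. T \<inter> S = A})
       / real (card (wired_spanning_trees n :: (int ^ 'd) set set set))"

(* F is a sample of the WUSF of Z^d on the probability space M: its law is the weak limit
   of the wired USTs, i.e. all cylinder probabilities are the limits of the wired UST ones. *)
definition is_wusf :: "'a measure \<Rightarrow> ('a \<Rightarrow> (int ^ 'd) set set) \<Rightarrow> bool" where
  "is_wusf M F \<longleftrightarrow>
     prob_space M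
     \<and> (\<forall>\<omega>\<in>space M. F \<omega> \<subseteq> zd_edges)
     \<and> (\<forall>e. {\<omega>\<in>space M. e \<in> F \<omega>} \<in> sets M)
     \<and> (\<forall>S A. finite S \<longrightarrow> S \<subseteq> zd_edges \<longrightarrow> A \<subseteq> S \<longrightarrow>
          (\<lambda>n. wired_ust_prob n S A) \<longlonglongrightarrow> measure M {\<omega>\<in>space M. F \<omega> \<inter> S = A})"

end

theory Submission
  imports Defs "HOL-Library.Nat_Bijection"
begin

(* Let e = {u, w} be an edge of H whose endpoint u lies on none of the earlier edges.
   In a wired spanning tree T of the box that avoids e, the tree path from u to w leaves u
   through some edge f; exchanging f for e yields another wired spanning tree, and since the
   earlier edges do not touch u, the cylinder event on them is unaffected.  Mapping such T to
   (f, T - f + e), and trees containing e to (e, T), is injective into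
   (edges at u) x (trees containing e), so under every wired UST, and hence in the limit,
   e is present with conditional probability at least 1/2d.
   An ordering of H in which every edge has such a fresh endpoint exists: root each component
   of the forest, give every edge its endpoint farther from the root as child, and list the
   edges by a rank of their children that increases along parent edges and takes values in nat;
   the binary code of the (finite) ancestor set is such a rank. *)

lemma graph_rel_edge: "{u, v} \<in> T \<Longrightarrow> (f u, f v) \<in> graph_rel f T"
  unfolding graph_rel_def by auto

lemma graph_relE:
  assumes "(a, b) \<in> graph_rel f T"
  obtains u v where "a = f u" "b = f v" "{u, v} \<in> T"
  using assms unfolding graph_rel_def by auto

lemma graph_rel_sym: "(a, b) \<in> graph_rel f T \<Longrightarrow> (b, a) \<in> graph_rel f T"
  unfolding graph_rel_def by (auto, metis insert_commute)

lemma graph_rel_mono: "T \<subseteq> U \<Longrightarrow> graph_rel f T \<subseteq> graph_rel f U"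
  unfolding graph_rel_def by auto

lemma rtrancl_graph_rel_sym:
  "(a, b) \<in> (graph_rel f T)\<^sup>* \<Longrightarrow> (b, a) \<in> (graph_rel f T)\<^sup>*"
  by (induction rule: rtrancl_induct) (auto intro: converse_rtrancl_into_rtrancl graph_rel_sym)

lemma rtrancl_graph_rel_mono:
  "T \<subseteq> U \<Longrightarrow> (a, b) \<in> (graph_rel f T)\<^sup>* \<Longrightarrow> (a, b) \<in> (graph_rel f U)\<^sup>*"
  using rtrancl_mono[OF graph_rel_mono] by blast

lemma rtrancl_graph_rel_edge: "{u, v} \<in> T \<Longrightarrow> (f u, f v) \<in> (graph_rel f T)\<^sup>*"
  by (rule r_into_rtrancl) (rule graph_rel_edge)

lemma rtrancl_graph_rel_subsetI:
  assumes "\<And>u v. {u, v} \<in> T \<Longrightarrow> (f u, f v) \<in> (graph_rel f U)\<^sup>*"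
  shows "(graph_rel f T)\<^sup>* \<subseteq> (graph_rel f U)\<^sup>*"
proof (rule rtrancl_subset_rtrancl, rule subsetI)
  fix p assume "p \<in> graph_rel f T"
  then obtain u v where "p = (f u, f v)" "{u, v} \<in> T"
    by (cases p) (auto elim: graph_relE)
  then show "p \<in> (graph_rel f U)\<^sup>*"
    using assms by simp
qed

lemma rtrancl_graph_rel_insert:
  assumes "(x, y) \<in> (graph_rel f (insert {s, t} X))\<^sup>*"
  shows "(x, y) \<in> (graph_rel f X)\<^sup>*
    \<or> (x, f s) \<in> (graph_rel f X)\<^sup>* \<and> (f t, y) \<in> (graph_rel f X)\<^sup>*
    \<or> (x, f t) \<in> (graph_rel f X)\<^sup>* \<and> (f s, y) \<in> (graph_rel f X)\<^sup>*"
  using assms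
proof (induction rule: rtrancl_induct)
  case (step y z)
  then obtain a c where yz: "y = f a" "z = f c" "{a, c} \<in> insert {s, t} X"
    by (auto elim: graph_relE)
  show ?case
  proof (cases "{a, c} \<in> X")
    case True
    then have "(y, z) \<in> graph_rel f X"
      using yz graph_rel_edge by metis
    then show ?thesis
      using step.IH by (meson rtrancl.rtrancl_into_rtrancl)
  next
    case False
    then have "a = s \<and> c = t \<or> a = t \<and> c = s"
      using yz by (auto simp: doubleton_eq_iff)
    then show ?thesis
      using step.IH yz by auto
  qed
qed simp

lemma acyclic_viaD:
  "acyclic_via f T \<Longrightarrow> {u, v} \<in> T \<Longrightarrow> (f u, f v) \<notin> (graph_rel f (T - {{u, v}}))\<^sup>*"
  unfolding acyclic_via_def by blast

lemma acyclic_via_subset: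
  assumes "acyclic_via f T" "X \<subseteq> T"
  shows "acyclic_via f X"
  unfolding acyclic_via_def
proof (intro allI impI notI)
  fix u v assume uv: "{u, v} \<in> X" and cyc: "(f u, f v) \<in> (graph_rel f (X - {{u, v}}))\<^sup>*"
  have "X - {{u, v}} \<subseteq> T - {{u, v}}"
    using assms(2) by blast
  from rtrancl_graph_rel_mono[OF this cyc] acyclic_viaD[OF assms(1)] uv assms(2) show False
    by blast
qed

lemma rtrancl_graph_rel_insert_bridge:
  assumes "(x, y) \<in> (graph_rel f (insert {u, w} Y))\<^sup>*" "(x, y) \<notin> (graph_rel f Y)\<^sup>*"
    and "Y \<subseteq> Z" "(x, y) \<in> (graph_rel f Z)\<^sup>*"
  shows "(f u, f w) \<in> (graph_rel f Z)\<^sup>*"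
proof -
  have YZ: "(a, b) \<in> (graph_rel f Z)\<^sup>*" if "(a, b) \<in> (graph_rel f Y)\<^sup>*" for a b
    using that by (rule rtrancl_graph_rel_mono[OF \<open>Y \<subseteq> Z\<close>])
  from rtrancl_graph_rel_insert[OF assms(1)] assms(2) show ?thesis
  proof (elim disjE conjE)
    assume xu: "(x, f u) \<in> (graph_rel f Y)\<^sup>*" and wy: "(f w, y) \<in> (graph_rel f Y)\<^sup>*"
    show ?thesis
      using rtrancl_trans[OF rtrancl_trans[OF rtrancl_graph_rel_sym[OF YZ[OF xu]] assms(4)]
          rtrancl_graph_rel_sym[OF YZ[OF wy]]] .
  next
    assume xw: "(x, f w) \<in> (graph_rel f Y)\<^sup>*" and uy: "(f u, y) \<in> (graph_rel f Y)\<^sup>*"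
    show ?thesis
      using rtrancl_trans[OF rtrancl_trans[OF YZ[OF uy] rtrancl_graph_rel_sym[OF assms(4)]]
          YZ[OF xw]] .
  qed simp
qed

lemma acyclic_via_insert:
  assumes acyc: "acyclic_via f X" and apart: "(f u, f w) \<notin> (graph_rel f X)\<^sup>*"
  shows "acyclic_via f (insert {u, w} X)"
  unfolding acyclic_via_def
proof (intro allI impI notI)
  fix a c
  assume ac: "{a, c} \<in> insert {u, w} X"
    and cyc: "(f a, f c) \<in> (graph_rel f (insert {u, w} X - {{a, c}}))\<^sup>*"
  have "{u, w} \<notin> X"
    using apart rtrancl_graph_rel_edge[of u w X f] by blast
  have "(f u, f w) \<in> (graph_rel f X)\<^sup>*"
  proof (cases "{a, c} = {u, w}")
    case True
    then have "insert {u, w} X - {{a, c}} = X"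
      using \<open>{u, w} \<notin> X\<close> by auto
    with cyc have ac_conn: "(f a, f c) \<in> (graph_rel f X)\<^sup>*"
      by simp
    from True have "a = u \<and> c = w \<or> a = w \<and> c = u"
      by (auto simp: doubleton_eq_iff)
    then show ?thesis
      using ac_conn rtrancl_graph_rel_sym[OF ac_conn] by blast
  next
    case False
    then have acX: "{a, c} \<in> X"
      using ac by simp
    have "insert {u, w} X - {{a, c}} = insert {u, w} (X - {{a, c}})"
      using False by auto
    with cyc have "(f a, f c) \<in> (graph_rel f (insert {u, w} (X - {{a, c}})))\<^sup>*"
      by simp
    from rtrancl_graph_rel_insert_bridge[OF this acyclic_viaD[OF acyc acX] Diff_subset
        rtrancl_graph_rel_edge[OF acX]]
    show ?thesis .
  qed
  with apart show False
    by contradiction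
qed

lemma rtrancl_graph_rel_leave:
  assumes path: "(f u, y) \<in> (graph_rel f T)\<^sup>*" and "y \<noteq> f u"
    and inj_at: "\<And>x. f x = f u \<Longrightarrow> x = u"
  shows "\<exists>b. {u, b} \<in> T \<and> (f b, y) \<in> (graph_rel f {g \<in> T. u \<notin> g})\<^sup>*"
  using path \<open>y \<noteq> f u\<close>
proof (induction rule: rtrancl_induct)
  case (step y z)
  then obtain a c where yz: "y = f a" "z = f c" "{a, c} \<in> T"
    by (auto elim: graph_relE)
  show ?case
  proof (cases "u \<in> {a, c}")
    case True
    then have "{u, c} \<in> T"
      using yz step.prems by (auto simp: insert_commute)
    then show ?thesis
      using yz(2) by blast
  next
    case False
    then have "y \<noteq> f u"
      using yz inj_at by auto
    then obtain b where "{u, b} \<in> T" and bz: "(f b, y) \<in> (graph_rel f {g \<in> T. u \<notin> g})\<^sup>*"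
      using step.IH by blast
    moreover have "{a, c} \<in> {g \<in> T. u \<notin> g}"
      using False yz by simp
    then have "(y, z) \<in> graph_rel f {g \<in> T. u \<notin> g}"
      unfolding yz by (rule graph_rel_edge)
    ultimately show ?thesis
      using rtrancl.rtrancl_into_rtrancl[OF bz] by blast
  qed
qed simp

lemma rtrancl_graph_rel_exchange:
  assumes "(f b, f w) \<in> (graph_rel f (T - {{u, b}}))\<^sup>*"
  shows "(graph_rel f T)\<^sup>* \<subseteq> (graph_rel f (insert {u, w} (T - {{u, b}})))\<^sup>*"
proof (rule rtrancl_graph_rel_subsetI)
  let ?T' = "insert {u, w} (T - {{u, b}})"
  have "(f u, f w) \<in> (graph_rel f ?T')\<^sup>*"
    by (rule rtrancl_graph_rel_edge) simp
  moreover have "(f w, f b) \<in> (graph_rel f ?T')\<^sup>*"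
    using rtrancl_graph_rel_sym[OF assms] by (rule rtrancl_graph_rel_mono[rotated]) auto
  ultimately have ub: "(f u, f b) \<in> (graph_rel f ?T')\<^sup>*"
    by (rule rtrancl_trans)
  fix a c assume ac: "{a, c} \<in> T"
  show "(f a, f c) \<in> (graph_rel f ?T')\<^sup>*"
  proof (cases "{a, c} = {u, b}")
    case True
    then have "a = u \<and> c = b \<or> a = b \<and> c = u"
      by (auto simp: doubleton_eq_iff)
    then show ?thesis
      using ub rtrancl_graph_rel_sym[OF ub] by blast
  next
    case False
    then have "{a, c} \<in> ?T'"
      using ac by simp
    then show ?thesis
      by (rule rtrancl_graph_rel_edge)
  qed
qed

lemma acyclic_via_exchange:
  assumes acyc: "acyclic_via f T" and conn: "(f u, f w) \<in> (graph_rel f T)\<^sup>*"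
    and neq: "f u \<noteq> f w" and inj_at: "\<And>x. f x = f u \<Longrightarrow> x = u"
  obtains b where "{u, b} \<in> T"
    and "acyclic_via f (insert {u, w} (T - {{u, b}}))"
    and "(graph_rel f T)\<^sup>* \<subseteq> (graph_rel f (insert {u, w} (T - {{u, b}})))\<^sup>*"
proof -
  obtain b where ub: "{u, b} \<in> T"
    and path_b: "(f b, f w) \<in> (graph_rel f {g \<in> T. u \<notin> g})\<^sup>*"
    using rtrancl_graph_rel_leave[OF conn neq[symmetric] inj_at] by blast
  from path_b have bw: "(f b, f w) \<in> (graph_rel f (T - {{u, b}}))\<^sup>*"
    by (rule rtrancl_graph_rel_mono[rotated]) auto
  have "(f u, f w) \<notin> (graph_rel f (T - {{u, b}}))\<^sup>*"
  proof
    assume "(f u, f w) \<in> (graph_rel f (T - {{u, b}}))\<^sup>*"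
    from rtrancl_trans[OF this rtrancl_graph_rel_sym[OF bw]] acyclic_viaD[OF acyc ub]
    show False
      by contradiction
  qed
  from acyclic_via_insert[OF acyclic_via_subset[OF acyc Diff_subset] this]
    rtrancl_graph_rel_exchange[OF bw] ub
  show thesis
    by (rule that[rotated])
qed

lemma zd_edge_neq: "{u, w} \<in> zd_edges \<Longrightarrow> u \<noteq> w"
  unfolding zd_edges_def by auto

lemma wired_spanning_trees_subset_zd_edges: "T \<in> wired_spanning_trees n \<Longrightarrow> T \<subseteq> zd_edges"
  unfolding wired_spanning_trees_def wired_edges_def by auto

lemma rtrancl_wired_to_boundary:
  assumes "T \<in> wired_spanning_trees n"
  shows "(wq n x, None) \<in> (graph_rel (wq n) T)\<^sup>*"
  using assms unfolding wired_spanning_trees_def by (cases "x \<in> zbox n") (auto simp: wq_def)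

lemma wired_spanning_tree_exchange:
  assumes T: "T \<in> wired_spanning_trees n" and e: "{u, w} \<in> zd_edges" and u: "u \<in> zbox n"
  obtains b where "{u, b} \<in> T" and "insert {u, w} (T - {{u, b}}) \<in> wired_spanning_trees n"
proof -
  have conn: "(wq n u, wq n w) \<in> (graph_rel (wq n) T)\<^sup>*"
    using rtrancl_trans[OF rtrancl_wired_to_boundary[OF T]
        rtrancl_graph_rel_sym[OF rtrancl_wired_to_boundary[OF T]]] .
  have neq: "wq n u \<noteq> wq n w"
    using zd_edge_neq[OF e] u by (auto simp: wq_def)
  have inj_at: "x = u" if "wq n x = wq n u" for x
    using that u by (auto simp: wq_def split: if_splits)
  have acyc: "acyclic_via (wq n) T"
    using T unfolding wired_spanning_trees_def by blast
  obtain b where ub: "{u, b} \<in> T"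
    and acyc': "acyclic_via (wq n) (insert {u, w} (T - {{u, b}}))"
    and conn': "(graph_rel (wq n) T)\<^sup>* \<subseteq> (graph_rel (wq n) (insert {u, w} (T - {{u, b}})))\<^sup>*"
    by (rule acyclic_via_exchange[OF acyc conn neq inj_at])
  have "insert {u, w} (T - {{u, b}}) \<subseteq> wired_edges n"
    using T e u unfolding wired_spanning_trees_def wired_edges_def by auto
  moreover have "(Some x, None) \<in> (graph_rel (wq n) (insert {u, w} (T - {{u, b}})))\<^sup>*"
    if "x \<in> zbox n" for x
    using conn' T that unfolding wired_spanning_trees_def by blast
  ultimately have "insert {u, w} (T - {{u, b}}) \<in> wired_spanning_trees n"
    using acyc' unfolding wired_spanning_trees_def by blast
  then show thesis
    by (rule that[OF ub])
qed

lemma zd_neighbour: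
  fixes x y :: "int ^ 'd"
  assumes "(\<Sum>i\<in>UNIV. \<bar>x $ i - y $ i\<bar>) = 1"
  shows "\<exists>i s. s \<in> {1, -1} \<and> y = x + axis i s"
proof -
  define D where "D j = \<bar>x $ j - y $ j\<bar>" for j
  have sum_D: "sum D UNIV = 1" and D_nonneg: "\<And>j. D j \<ge> 0"
    using assms by (simp_all add: D_def)
  obtain i where "D i \<noteq> 0"
    using sum_D by (metis sum.neutral zero_neq_one)
  have "sum D UNIV = D i + sum D (UNIV - {i})"
    by (simp add: sum.remove)
  moreover have "sum D (UNIV - {i}) \<ge> 0"
    using D_nonneg by (simp add: sum_nonneg)
  ultimately have Di: "D i = 1" and rest: "sum D (UNIV - {i}) = 0"
    using sum_D \<open>D i \<noteq> 0\<close> D_nonneg[of i] by linarith+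
  have "y $ j = x $ j" if "j \<noteq> i" for j
    using rest D_nonneg that by (simp add: sum_nonneg_eq_0_iff D_def)
  moreover have "y $ i - x $ i \<in> {1, -1}"
    using Di unfolding D_def by (auto simp: abs_if split: if_splits)
  ultimately have "y = x + axis i (y $ i - x $ i)"
    by (auto simp: vec_eq_iff axis_def)
  then show ?thesis
    using \<open>y $ i - x $ i \<in> {1, -1}\<close> by blast
qed

lemma zd_edges_at_subset:
  fixes u :: "int ^ 'd"
  shows "{g \<in> zd_edges. u \<in> g} \<subseteq> (\<lambda>(i, s). {u, u + axis i s}) ` (UNIV \<times> {1, -1})"
proof
  fix g assume "g \<in> {g \<in> zd_edges. u \<in> g}"
  then obtain x y where g: "g = {x, y}" "u \<in> g" and xy: "(\<Sum>i\<in>UNIV. \<bar>x $ i - y $ i\<bar>) = 1"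
    unfolding zd_edges_def by auto
  have yx: "(\<Sum>i\<in>UNIV. \<bar>y $ i - x $ i\<bar>) = 1"
    using xy by (simp add: abs_minus_commute)
  obtain v where "g = {u, v}" "\<exists>i s. s \<in> {1, -1} \<and> v = u + axis i s"
    using g zd_neighbour[OF xy] zd_neighbour[OF yx] by (auto simp: insert_commute)
  then show "g \<in> (\<lambda>(i, s). {u, u + axis i s}) ` (UNIV \<times> {1, -1})"
    by auto
qed

lemma finite_zd_edges_at: "finite {g \<in> zd_edges. (u :: int ^ 'd) \<in> g}"
  by (rule finite_subset[OF zd_edges_at_subset]) auto

lemma card_zd_edges_at: "card {g \<in> zd_edges. (u :: int ^ 'd) \<in> g} \<le> 2 * CARD('d)"
proof -
  have "card {g \<in> zd_edges. u \<in> g} \<le> card (UNIV \<times> {1 :: int, -1} :: ('d \<times> int) set)"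
    by (rule surj_card_le[OF _ zd_edges_at_subset]) auto
  then show ?thesis
    by (simp add: card_cartesian_product)
qed

lemma wired_spanning_tree_swap_edge:
  assumes T: "T \<in> wired_spanning_trees n" and e: "{u, w} \<in> zd_edges" and u: "u \<in> zbox n"
  shows "\<exists>g\<in>T. u \<in> g \<and> insert {u, w} (T - {g}) \<in> wired_spanning_trees n
    \<and> ({u, w} \<in> T \<longrightarrow> g = {u, w})"
proof (cases "{u, w} \<in> T")
  case True
  then show ?thesis
    using T by (intro bexI[of _ "{u, w}"]) (auto simp: insert_absorb)
next
  case False
  obtain b where "{u, b} \<in> T" "insert {u, w} (T - {{u, b}}) \<in> wired_spanning_trees n"
    by (rule wired_spanning_tree_exchange[OF T e u])
  then show ?thesis
    using False by (intro bexI[of _ "{u, b}"]) simp_all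
qed

lemma card_le_mult_card_if_inj_on:
  assumes "inj_on \<phi> X" "\<phi> ` X \<subseteq> E \<times> Z" "finite E" "finite Z" "card E \<le> k"
  shows "card X \<le> k * card Z"
proof -
  have "card X \<le> card (E \<times> Z)"
    using assms by (intro card_inj_on_le) auto
  also have "\<dots> \<le> k * card Z"
    using assms(5) by (simp add: card_cartesian_product)
  finally show ?thesis .
qed

lemma card_wired_trees_le_with_edge:
  fixes S A :: "(int ^ 'd) set set"
  assumes e: "{u, w} \<in> zd_edges" and u: "u \<in> zbox n" and fresh: "\<forall>g\<in>S. u \<notin> g"
  shows "card {T \<in> wired_spanning_trees n. T \<inter> S = A}
    \<le> 2 * CARD('d) * card {T \<in> wired_spanning_trees n. T \<inter> S = A \<and> {u, w} \<in> T}"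
    (is "card ?X \<le> _ * card ?Z")
proof (cases "finite ?Z")
  case True
  obtain g where g: "\<And>T. T \<in> wired_spanning_trees n \<Longrightarrow>
      g T \<in> T \<and> u \<in> g T \<and> insert {u, w} (T - {g T}) \<in> wired_spanning_trees n
      \<and> ({u, w} \<in> T \<longrightarrow> g T = {u, w})"
    using wired_spanning_tree_swap_edge[OF _ e u] by metis
  define swap where "swap T = (g T, insert {u, w} (T - {g T}))" for T
  define unswap where
    "unswap = (\<lambda>(h, T'). insert h (if h = {u, w} then T' else T' - {{u, w}}))"
  have "unswap (swap T) = T" if "T \<in> ?X" for T
    using that g[of T] unfolding swap_def unswap_def by auto
  then have "inj_on swap ?X"
    by (rule inj_on_inverseI)
  moreover have "swap ` ?X \<subseteq> {g \<in> zd_edges. u \<in> g} \<times> ?Z"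
    using g wired_spanning_trees_subset_zd_edges fresh unfolding swap_def by fastforce
  ultimately show ?thesis
    using finite_zd_edges_at True card_zd_edges_at by (rule card_le_mult_card_if_inj_on)
next
  case False
  then have "infinite ?X"
    by (rule contrapos_nn) (auto elim: finite_subset[rotated])
  then show ?thesis
    by simp
qed

lemma eventually_in_zbox: "eventually (\<lambda>n. u \<in> zbox n) sequentially"
proof (rule eventually_sequentiallyI)
  fix n assume "nat (\<Sum>i\<in>UNIV. \<bar>u $ i\<bar>) \<le> n"
  then have "(\<Sum>i\<in>UNIV. \<bar>u $ i\<bar>) \<le> int n"
    by (simp add: nat_le_iff)
  moreover have "\<bar>u $ i\<bar> \<le> (\<Sum>i\<in>UNIV. \<bar>u $ i\<bar>)" for i
    by (rule member_le_sum) auto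
  ultimately show "u \<in> zbox n"
    unfolding zbox_def using order_trans by blast
qed

lemma cylinder_insert_edge_eq:
  assumes "e \<notin> S" "A \<subseteq> S"
  shows "T \<inter> insert e S = insert e A \<longleftrightarrow> e \<in> T \<and> T \<inter> S = A"
  using assms by auto

lemma Int_partition_eq_iff: "A \<inter> B = {} \<Longrightarrow> T \<inter> (A \<union> B) = A \<longleftrightarrow> A \<subseteq> T \<and> B \<inter> T = {}"
  by (auto simp: set_eq_iff)

lemma wired_ust_prob_insert_edge_ge:
  fixes S A :: "(int ^ 'd) set set"
  assumes e: "{u, w} \<in> zd_edges" and u: "u \<in> zbox n" and fresh: "\<forall>g\<in>S. u \<notin> g" and "A \<subseteq> S"
  shows "(1 / (2 * real CARD('d))) * wired_ust_prob n S A
    \<le> wired_ust_prob n (insert {u, w} S) (insert {u, w} A)"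
proof -
  define c where "c = 1 / (2 * real CARD('d))"
  define x where "x = real (card {T \<in> wired_spanning_trees n. T \<inter> S = A})"
  define z where "z = real (card {T \<in> wired_spanning_trees n. T \<inter> S = A \<and> {u, w} \<in> T})"
  define D where "D = real (card (wired_spanning_trees n :: (int ^ 'd) set set set))"
  have "{u, w} \<notin> S"
    using fresh by blast
  then have "{T \<in> wired_spanning_trees n. T \<inter> insert {u, w} S = insert {u, w} A}
      = {T \<in> wired_spanning_trees n. T \<inter> S = A \<and> {u, w} \<in> T}"
    using cylinder_insert_edge_eq[OF _ \<open>A \<subseteq> S\<close>] by blast
  then have prob_eq: "wired_ust_prob n (insert {u, w} S) (insert {u, w} A) = z / D"
    unfolding wired_ust_prob_def z_def D_def by simp
  have "x \<le> real (2 * CARD('d) * card {T \<in> wired_spanning_trees n. T \<inter> S = A \<and> {u, w} \<in> T})"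
    using card_wired_trees_le_with_edge[OF e u fresh, of A] unfolding x_def
    by (simp only: of_nat_le_iff)
  then have "x \<le> 2 * real CARD('d) * z"
    unfolding z_def by simp
  then have "c * x \<le> z"
    unfolding c_def by (simp add: field_simps)
  then have "(c * x) / D \<le> z / D"
    by (rule divide_right_mono) (simp add: D_def)
  moreover have "c * wired_ust_prob n S A = (c * x) / D"
    unfolding wired_ust_prob_def x_def D_def by simp
  ultimately show ?thesis
    unfolding prob_eq c_def by simp
qed

lemma wusf_insert_edge_ge:
  fixes M :: "'a measure" and F :: "'a \<Rightarrow> (int ^ 'd) set set"
  assumes wusf: "is_wusf M F" and S: "finite S" "S \<subseteq> zd_edges" and "A \<subseteq> S"
    and e: "{u, w} \<in> zd_edges" and fresh: "\<forall>g\<in>S. u \<notin> g"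
  shows "measure M {\<omega>\<in>space M. F \<omega> \<inter> insert {u, w} S = insert {u, w} A}
    \<ge> (1 / (2 * real CARD('d))) * measure M {\<omega>\<in>space M. F \<omega> \<inter> S = A}"
proof (rule tendsto_le[OF sequentially_bot])
  have lim: "\<And>S A. finite S \<Longrightarrow> S \<subseteq> zd_edges \<Longrightarrow> A \<subseteq> S \<Longrightarrow>
      (\<lambda>n. wired_ust_prob n S A) \<longlonglongrightarrow> measure M {\<omega>\<in>space M. F \<omega> \<inter> S = A}"
    using wusf unfolding is_wusf_def by blast
  show "(\<lambda>n. wired_ust_prob n (insert {u, w} S) (insert {u, w} A))
      \<longlonglongrightarrow> measure M {\<omega>\<in>space M. F \<omega> \<inter> insert {u, w} S = insert {u, w} A}"
    using S \<open>A \<subseteq> S\<close> e by (intro lim) auto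
  show "(\<lambda>n. (1 / (2 * real CARD('d))) * wired_ust_prob n S A)
      \<longlonglongrightarrow> (1 / (2 * real CARD('d))) * measure M {\<omega>\<in>space M. F \<omega> \<inter> S = A}"
    using S \<open>A \<subseteq> S\<close> by (intro tendsto_mult_left lim)
  show "\<forall>\<^sub>F n in sequentially. (1 / (2 * real CARD('d))) * wired_ust_prob n S A
      \<le> wired_ust_prob n (insert {u, w} S) (insert {u, w} A)"
    using eventually_in_zbox[of u]
    by eventually_elim (rule wired_ust_prob_insert_edge_ge[OF e _ fresh \<open>A \<subseteq> S\<close>])
qed

lemma graph_rel_id_iff: "(x, y) \<in> graph_rel id H \<longleftrightarrow> {x, y} \<in> H"
  unfolding graph_rel_def by auto

locale forest =
  fixes H :: "'v set set"
  assumes acyclic: "acyclic_via id H"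
    and doubleton: "\<And>h. h \<in> H \<Longrightarrow> \<exists>x y. h = {x, y}"
begin

abbreviation adj :: "('v \<times> 'v) set" where
  "adj \<equiv> graph_rel id H"

definition root_of :: "'v \<Rightarrow> 'v" where
  "root_of v = (SOME r. (v, r) \<in> adj\<^sup>*)"

definition graph_dist :: "'v \<Rightarrow> 'v \<Rightarrow> nat" where
  "graph_dist r v = (LEAST k. (r, v) \<in> adj ^^ k)"

definition depth :: "'v \<Rightarrow> nat" where
  "depth v = graph_dist (root_of v) v"

definition parent :: "('v \<times> 'v) set" where
  "parent = {(x, v). {x, v} \<in> H \<and> depth v = Suc (depth x)}"

lemma no_cycle: "{x, y} \<in> H \<Longrightarrow> (x, y) \<notin> (graph_rel id (H - {{x, y}}))\<^sup>*"
  using acyclic_viaD[OF acyclic] by (metis id_apply)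

lemma adj_step: "(r, x) \<in> adj\<^sup>* \<Longrightarrow> {x, y} \<in> H \<Longrightarrow> (r, y) \<in> adj\<^sup>*"
  by (rule rtrancl.rtrancl_into_rtrancl) (simp_all add: graph_rel_id_iff)

lemma root_connected: "(root_of v, v) \<in> adj\<^sup>*"
  unfolding root_of_def by (rule rtrancl_graph_rel_sym, rule someI[of _ v]) simp

lemma root_eq:
  assumes "(x, v) \<in> adj\<^sup>*"
  shows "root_of x = root_of v"
proof -
  have "(x, r) \<in> adj\<^sup>* \<longleftrightarrow> (v, r) \<in> adj\<^sup>*" for r
    using rtrancl_trans[OF assms] rtrancl_trans[OF rtrancl_graph_rel_sym[OF assms]] by blast
  then show ?thesis
    unfolding root_of_def by simp
qed

lemma relpow_graph_dist: "(r, v) \<in> adj\<^sup>* \<Longrightarrow> (r, v) \<in> adj ^^ graph_dist r v"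
  unfolding graph_dist_def by (rule LeastI_ex) (simp add: rtrancl_power)

lemma graph_dist_le: "(r, v) \<in> adj ^^ k \<Longrightarrow> graph_dist r v \<le> k"
  unfolding graph_dist_def by (rule Least_le)

lemma relpow_SucE:
  assumes "(r, v) \<in> adj ^^ Suc k"
  obtains y where "(r, y) \<in> adj ^^ k" "{y, v} \<in> H"
  using assms by (auto simp: graph_rel_id_iff)

lemma relpow_avoids_far_edge:
  assumes "(r, v) \<in> adj ^^ k" "z \<in> g" "k < graph_dist r z"
  shows "(r, v) \<in> (graph_rel id (H - {g}))\<^sup>*"
  using assms
proof (induction k arbitrary: v)
  case (Suc k)
  obtain y where ry: "(r, y) \<in> adj ^^ k" and yv: "{y, v} \<in> H"
    using relpow_SucE[OF Suc.prems(1)] .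
  have "graph_dist r y \<le> k" "graph_dist r v \<le> Suc k"
    using graph_dist_le[OF ry] graph_dist_le[OF Suc.prems(1)] .
  then have "{y, v} \<in> H - {g}"
    using yv Suc.prems(2,3) by auto
  then have "(y, v) \<in> graph_rel id (H - {g})"
    by (simp only: graph_rel_id_iff)
  with Suc.IH[OF ry Suc.prems(2) Suc_lessD[OF Suc.prems(3)]] show ?case
    by (rule rtrancl.rtrancl_into_rtrancl)
qed simp

lemma graph_dist_edge_neq:
  assumes rx: "(r, x) \<in> adj\<^sup>*" and xy: "{x, y} \<in> H"
  shows "graph_dist r x \<noteq> graph_dist r y"
proof
  \<comment> \<open>Shortest walks from \<open>r\<close> to \<open>x\<close> and to \<open>y\<close> would close a cycle with the edge \<open>{x, y}\<close>.\<close>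
  let ?G = "(graph_rel id (H - {{x, y}}))\<^sup>*"
  assume eq: "graph_dist r x = graph_dist r y"
  have px: "(r, x) \<in> adj ^^ graph_dist r x" and py: "(r, y) \<in> adj ^^ graph_dist r x"
    using relpow_graph_dist[OF rx] relpow_graph_dist[OF adj_step[OF rx xy]] eq by simp_all
  have "x \<noteq> y"
    using no_cycle[OF xy] by auto
  then obtain j where j: "graph_dist r x = Suc j"
    using px py by (cases "graph_dist r x") auto
  obtain z where rz: "(r, z) \<in> adj ^^ j" and zx: "{z, x} \<in> H"
    using relpow_SucE px j by metis
  obtain z' where rz': "(r, z') \<in> adj ^^ j" and zy: "{z', y} \<in> H"
    using relpow_SucE py j by metis
  have "graph_dist r z < graph_dist r x" "graph_dist r z' < graph_dist r x"
    using graph_dist_le[OF rz] graph_dist_le[OF rz'] j by simp_all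
  then have "{z, x} \<in> H - {{x, y}}" "{z', y} \<in> H - {{x, y}}"
    using zx zy eq by (auto simp: doubleton_eq_iff)
  then have "(z, x) \<in> ?G" "(z', y) \<in> ?G"
    by (simp_all add: graph_rel_id_iff r_into_rtrancl)
  moreover have "(r, z) \<in> ?G" "(r, z') \<in> ?G"
    using relpow_avoids_far_edge[OF rz, of x] relpow_avoids_far_edge[OF rz', of x] j by simp_all
  ultimately have "(x, y) \<in> ?G"
    using rtrancl_trans rtrancl_graph_rel_sym by metis
  with no_cycle[OF xy] show False
    by contradiction
qed

lemma depth_edge:
  assumes xy: "{x, y} \<in> H"
  shows "depth y = Suc (depth x) \<or> depth x = Suc (depth y)"
proof -
  have rx: "(root_of x, x) \<in> adj\<^sup>*"
    by (rule root_connected)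
  have ry: "(root_of x, y) \<in> adj\<^sup>*"
    using adj_step[OF rx xy] .
  have same_root: "root_of y = root_of x"
    using root_eq[OF adj_step[OF rtrancl.rtrancl_refl xy]] by simp
  have "(x, y) \<in> adj" "(y, x) \<in> adj"
    using xy by (simp_all add: graph_rel_id_iff insert_commute)
  then have "graph_dist (root_of x) y \<le> Suc (graph_dist (root_of x) x)"
    and "graph_dist (root_of x) x \<le> Suc (graph_dist (root_of x) y)"
    using graph_dist_le[OF relpow_Suc_I[OF relpow_graph_dist[OF rx]]]
      graph_dist_le[OF relpow_Suc_I[OF relpow_graph_dist[OF ry]]]
    by blast+
  then show ?thesis
    using graph_dist_edge_neq[OF rx xy] unfolding depth_def same_root by linarith
qed

lemma parent_unique:
  assumes xv: "(x, v) \<in> parent" and x'v: "(x', v) \<in> parent"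
  shows "x = x'"
proof (rule ccontr)
  let ?G = "(graph_rel id (H - {{x, v}}))\<^sup>*"
  assume "x \<noteq> x'"
  have e: "{x, v} \<in> H" "{x', v} \<in> H" and d: "depth v = Suc (depth x)" "depth x' = depth x"
    using assms unfolding parent_def by auto
  have roots: "root_of x = root_of v" "root_of x' = root_of v"
    using root_eq adj_step[OF rtrancl.rtrancl_refl] e by auto
  have rx: "(root_of v, x) \<in> adj ^^ depth x" and rx': "(root_of v, x') \<in> adj ^^ depth x"
    using relpow_graph_dist[OF root_connected, of x] relpow_graph_dist[OF root_connected, of x']
      d(2) roots
    unfolding depth_def by simp_all
  have far: "depth x < graph_dist (root_of v) v"
    using d unfolding depth_def by simp
  have "(root_of v, x) \<in> ?G" "(root_of v, x') \<in> ?G"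
    using relpow_avoids_far_edge[OF rx _ far] relpow_avoids_far_edge[OF rx' _ far] by simp_all
  moreover have "{x', v} \<in> H - {{x, v}}"
    using e \<open>x \<noteq> x'\<close> d by (auto simp: doubleton_eq_iff)
  then have "(x', v) \<in> ?G"
    by (simp add: graph_rel_id_iff r_into_rtrancl)
  ultimately have "(x, v) \<in> ?G"
    using rtrancl_trans rtrancl_graph_rel_sym by metis
  with no_cycle[OF e(1)] show False
    by contradiction
qed

lemma edge_parent:
  assumes "h \<in> H"
  shows "\<exists>x v. h = {x, v} \<and> (x, v) \<in> parent"
proof -
  obtain x y where h: "h = {x, y}"
    using doubleton[OF assms] by blast
  then have "{x, y} \<in> H" "{y, x} \<in> H"
    using assms by (simp_all add: insert_commute)
  from depth_edge[OF \<open>{x, y} \<in> H\<close>] show ?thesis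
  proof
    assume "depth y = Suc (depth x)"
    with h \<open>{x, y} \<in> H\<close> show ?thesis
      unfolding parent_def by blast
  next
    assume "depth x = Suc (depth y)"
    with h \<open>{y, x} \<in> H\<close> show ?thesis
      unfolding parent_def by (intro exI[of _ y] exI[of _ x]) (simp add: insert_commute)
  qed
qed

definition child :: "'v set \<Rightarrow> 'v" where
  "child h = (SOME v. \<exists>x. h = {x, v} \<and> (x, v) \<in> parent)"

lemma edge_child:
  assumes "h \<in> H"
  shows "\<exists>x. h = {x, child h} \<and> (x, child h) \<in> parent"
proof -
  have "\<exists>v x. h = {x, v} \<and> (x, v) \<in> parent"
    using edge_parent[OF assms] by blast
  then show ?thesis
    unfolding child_def by (rule someI_ex)
qed

lemma inj_on_child: "inj_on child H"
proof (rule inj_onI)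
  fix h g assume "h \<in> H" "g \<in> H" "child h = child g"
  with edge_child[of h] edge_child[of g] parent_unique show "h = g"
    by metis
qed

lemma child_in_other_edge:
  assumes "h \<in> H" "g \<in> H" "g \<noteq> h" "child h \<in> g"
  shows "(child h, child g) \<in> parent"
proof -
  obtain y where "g = {y, child g}" "(y, child g) \<in> parent"
    using edge_child[OF \<open>g \<in> H\<close>] by blast
  moreover have "child h \<noteq> child g"
    using inj_onD[OF inj_on_child] assms(1-3) by metis
  ultimately show ?thesis
    using assms(4) by auto
qed

lemma acyclic_parent: "acyclic parent"
proof -
  have "depth x < depth y" if "(x, y) \<in> parent\<^sup>+" for x y
    using that by (induction rule: trancl_induct) (auto simp: parent_def)
  then show ?thesis
    unfolding acyclic_def by blast
qed

lemma finite_ancestors: "finite {y. (y, v) \<in> parent\<^sup>*}"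
proof (induction "depth v" arbitrary: v rule: less_induct)
  case less
  have "{y. (y, v) \<in> parent\<^sup>*} \<subseteq> insert v (\<Union>p\<in>{p. (p, v) \<in> parent}. {y. (y, p) \<in> parent\<^sup>*})"
  proof
    fix y assume "y \<in> {y. (y, v) \<in> parent\<^sup>*}"
    then have "(y, v) \<in> parent\<^sup>*"
      by simp
    then show "y \<in> insert v (\<Union>p\<in>{p. (p, v) \<in> parent}. {y. (y, p) \<in> parent\<^sup>*})"
      by (cases rule: rtranclE) auto
  qed
  moreover have "finite {p. (p, v) \<in> parent}"
  proof (cases "\<exists>p. (p, v) \<in> parent")
    case True
    then obtain p where "(p, v) \<in> parent"
      by blast
    then have "{p. (p, v) \<in> parent} \<subseteq> {p}"
      using parent_unique by blast
    then show ?thesis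
      by (rule finite_subset) simp
  qed simp
  moreover have "finite {y. (y, p) \<in> parent\<^sup>*}" if "(p, v) \<in> parent" for p
    using less that unfolding parent_def by auto
  ultimately show ?case
    by (auto intro: finite_subset)
qed

end

lemma forest_zd_edges:
  assumes "H \<subseteq> zd_edges" "acyclic_via id H"
  shows "forest H"
proof
  show "acyclic_via id H"
    by (rule assms(2))
  show "\<exists>x y. h = {x, y}" if "h \<in> H" for h
    using that assms(1) unfolding zd_edges_def by blast
qed

lemma set_encode_psubset:
  assumes "finite B" "A \<subset> B"
  shows "set_encode A < set_encode B"
proof -
  have "set_encode B = set_encode A + (\<Sum>i\<in>B - A. 2 ^ i)"
    using assms unfolding set_encode_def
    by (metis add.commute finite_Diff psubset_imp_subset sum.subset_diff)
  moreover have "(\<Sum>i\<in>B - A. 2 ^ i :: nat) > 0"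
    using assms by (intro sum_pos) auto
  ultimately show ?thesis
    by simp
qed

lemma nat_rank_of_finite_ancestors:
  fixes P :: "('a::countable \<times> 'a) set"
  assumes acyc: "acyclic P" and fin: "\<And>v. finite {y. (y, v) \<in> P\<^sup>*}"
  shows "\<exists>rk :: 'a \<Rightarrow> nat. inj rk \<and> (\<forall>x v. (x, v) \<in> P \<longrightarrow> rk x < rk v)"
proof -
  define anc where "anc v = {y. (y, v) \<in> P\<^sup>*}" for v
  define rk where "rk v = set_encode (to_nat ` anc v)" for v
  have "inj rk"
  proof (rule injI)
    fix x v assume "rk x = rk v"
    then have "to_nat ` anc x = to_nat ` anc v"
      using fin unfolding rk_def anc_def by (simp add: set_encode_eq)
    then have "anc x = anc v"
      by (simp add: inj_image_eq_iff)
    then have xv: "(x, v) \<in> P\<^sup>*" and vx: "(v, x) \<in> P\<^sup>*"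
      unfolding anc_def by blast+
    show "x = v"
    proof (rule ccontr)
      assume "x \<noteq> v"
      with xv have "(x, v) \<in> P\<^sup>+"
        by (simp add: rtrancl_eq_or_trancl)
      from trancl_rtrancl_trancl[OF this vx] acyc show False
        unfolding acyclic_def by blast
    qed
  qed
  moreover have "rk x < rk v" if xv: "(x, v) \<in> P" for x v
  proof -
    have "(v, x) \<notin> P\<^sup>*"
      using acyc rtrancl_into_trancl1[OF _ xv] unfolding acyclic_def by blast
    then have "v \<notin> anc x"
      unfolding anc_def by simp
    moreover have "anc x \<subseteq> anc v" "v \<in> anc v"
      unfolding anc_def using rtrancl_into_rtrancl[OF _ xv] by auto
    ultimately have "anc x \<subset> anc v"
      by blast
    then have "to_nat ` anc x \<subset> to_nat ` anc v"
      by (rule image_strict_mono[OF inj_on_subset[OF inj_to_nat subset_UNIV]])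
    then show ?thesis
      unfolding rk_def using fin by (intro set_encode_psubset) (simp_all add: anc_def)
  qed
  ultimately show ?thesis
    by blast
qed

definition index_set :: "'a set \<Rightarrow> nat set" where
  "index_set X = (if finite X then {1..card X} else {1..})"

lemma enumerate_index_set:
  fixes K :: "nat set"
  shows "bij_betw (\<lambda>n. enumerate K (n - 1)) (index_set K) K
    \<and> strict_mono_on (index_set K) (\<lambda>n. enumerate K (n - 1))"
proof (cases "finite K")
  case True
  have "bij_betw (\<lambda>n. n - 1) {1..card K} {..<card K}"
    by (rule bij_betwI[where g = Suc]) auto
  from bij_betw_trans[OF this finite_bij_enumerate[OF True]]
  have "bij_betw (\<lambda>n. enumerate K (n - 1)) {1..card K} K"
    by (simp add: comp_def)
  moreover have "strict_mono_on {1..card K} (\<lambda>n. enumerate K (n - 1))"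
    using True by (intro strict_mono_onI finite_enumerate_mono) auto
  ultimately show ?thesis
    using True unfolding index_set_def by simp
next
  case False
  have "bij_betw (\<lambda>n. n - 1) {1..} (UNIV :: nat set)"
    by (rule bij_betwI[where g = Suc]) auto
  from bij_betw_trans[OF this bij_enumerate[OF False]]
  have "bij_betw (\<lambda>n. enumerate K (n - 1)) {1..} K"
    by (simp add: comp_def)
  moreover have "strict_mono_on {1..} (\<lambda>n. enumerate K (n - 1))"
    using False by (intro strict_mono_onI enumerate_mono) auto
  ultimately show ?thesis
    using False unfolding index_set_def by simp
qed

lemma enumeration_increasing:
  fixes R :: "'a \<Rightarrow> nat"
  assumes inj: "inj_on R X"
  shows "\<exists>e. bij_betw e (index_set X) X \<and> strict_mono_on (index_set X) (R \<circ> e)"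
proof -
  define enum where "enum n = enumerate (R ` X) (n - 1)" for n
  have "index_set (R ` X) = index_set X"
    using inj unfolding index_set_def by (simp add: card_image finite_image_iff)
  then have enum: "bij_betw enum (index_set X) (R ` X)" "strict_mono_on (index_set X) enum"
    using enumerate_index_set[of "R ` X"] unfolding enum_def by simp_all
  define e where "e = the_inv_into X R \<circ> enum"
  have "bij_betw e (index_set X) X"
    unfolding e_def using enum(1) bij_betw_the_inv_into[OF inj_on_imp_bij_betw[OF inj]]
    by (rule bij_betw_trans)
  moreover have R_e: "R (e n) = enum n" if "n \<in> index_set X" for n
    unfolding e_def using f_the_inv_into_f[OF inj] bij_betwE[OF enum(1)] that by simp
  have "strict_mono_on (index_set X) (R \<circ> e)"
    using enum(2) R_e by (auto intro!: strict_mono_onI dest: strict_mono_onD)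
  ultimately show ?thesis
    by blast
qed

lemma forest_enumeration:
  fixes H :: "('v::countable) set set"
  assumes "forest H"
  shows "\<exists>e. bij_betw e (index_set H) H \<and> (\<forall>n\<in>index_set H. \<exists>u\<in>e n. \<forall>m\<in>{1..<n}. u \<notin> e m)"
proof -
  interpret forest H by fact
  obtain rk :: "'v \<Rightarrow> nat" where "inj rk" and rk_parent: "\<And>x v. (x, v) \<in> parent \<Longrightarrow> rk x < rk v"
    using nat_rank_of_finite_ancestors[OF acyclic_parent finite_ancestors] by blast
  then have "inj_on (rk \<circ> child) H"
    using inj_on_child by (simp add: comp_inj_on inj_on_subset)
  then obtain e where e: "bij_betw e (index_set H) H"
    and mono: "strict_mono_on (index_set H) (rk \<circ> child \<circ> e)"
    using enumeration_increasing by (metis comp_assoc)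
  have "\<exists>u\<in>e n. \<forall>m\<in>{1..<n}. u \<notin> e m" if n: "n \<in> index_set H" for n
  proof (intro bexI ballI notI)
    show "child (e n) \<in> e n"
      using edge_child e n by (metis bij_betwE insertCI)
    fix m assume m: "m \<in> {1..<n}" and "child (e n) \<in> e m"
    have "m \<in> index_set H"
      using m n unfolding index_set_def by (auto split: if_splits)
    then have "e m \<in> H" "e m \<noteq> e n"
      using e m n by (auto simp: bij_betw_def inj_on_def)
    then have "rk (child (e n)) < rk (child (e m))"
      using rk_parent child_in_other_edge \<open>child (e n) \<in> e m\<close> e n by (meson bij_betwE)
    moreover have "rk (child (e m)) < rk (child (e n))"
      using mono \<open>m \<in> index_set H\<close> n m by (auto simp: strict_mono_on_def)
    ultimately show False
      by simp
  qed
  with e show ?thesis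
    by blast
qed

lemma wusf_fresh_edge_given_cylinder_ge:
  fixes M :: "'a measure" and F :: "'a \<Rightarrow> (int ^ 'd) set set"
  assumes wusf: "is_wusf M F" and AB: "finite (A \<union> B)" "A \<union> B \<subseteq> zd_edges" "A \<inter> B = {}"
    and h: "h \<in> zd_edges" "u \<in> h" and fresh: "\<forall>g\<in>A \<union> B. u \<notin> g"
  shows "measure M {\<omega>\<in>space M. h \<in> F \<omega> \<and> A \<subseteq> F \<omega> \<and> B \<inter> F \<omega> = {}}
    \<ge> (1 / (2 * real CARD('d))) * measure M {\<omega>\<in>space M. A \<subseteq> F \<omega> \<and> B \<inter> F \<omega> = {}}"
proof -
  obtain x y where "h = {x, y}"
    using h(1) unfolding zd_edges_def by blast
  with h(2) obtain w where hw: "h = {u, w}"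
    by blast
  have "h \<notin> A \<union> B"
    using fresh h(2) by blast
  from wusf_insert_edge_ge[OF wusf AB(1,2) Un_upper1 h(1)[unfolded hw] fresh] show ?thesis
    unfolding hw[symmetric]
    by (simp only: cylinder_insert_edge_eq[OF \<open>h \<notin> A \<union> B\<close> Un_upper1]
        Int_partition_eq_iff[OF AB(3)])
qed

theorem claim2p1:
  fixes M :: "'a measure" and F :: "'a \<Rightarrow> (int ^ 'd) set set" and H :: "(int ^ 'd) set set"
  assumes "is_wusf M F"
    and "H \<subseteq> zd_edges"
    and "acyclic_via id H"
  shows "\<exists>e :: nat \<Rightarrow> (int ^ 'd) set.
           bij_betw e (if finite H then {1..card H} else {1..}) H \<and>
           (\<forall>n \<in> (if finite H then {1..card H} else {1..}). \<forall>A B.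
              A \<union> B = e ` {1..<n} \<and> A \<inter> B = {} \<longrightarrow>
              measure M {\<omega>\<in>space M. e n \<in> F \<omega> \<and> A \<subseteq> F \<omega> \<and> B \<inter> F \<omega> = {}}
                \<ge> (1 / (2 * real CARD('d))) * measure M {\<omega>\<in>space M. A \<subseteq> F \<omega> \<and> B \<inter> F \<omega> = {}})"
proof -
  obtain e where e: "bij_betw e (index_set H) H"
    and fresh: "\<forall>n\<in>index_set H. \<exists>u\<in>e n. \<forall>m\<in>{1..<n}. u \<notin> e m"
    using forest_enumeration[OF forest_zd_edges[OF assms(2,3)]] by blast
  have "measure M {\<omega>\<in>space M. e n \<in> F \<omega> \<and> A \<subseteq> F \<omega> \<and> B \<inter> F \<omega> = {}}
      \<ge> (1 / (2 * real CARD('d))) * measure M {\<omega>\<in>space M. A \<subseteq> F \<omega> \<and> B \<inter> F \<omega> = {}}"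
    if n: "n \<in> index_set H" and AB: "A \<union> B = e ` {1..<n}" "A \<inter> B = {}" for n A B
  proof -
    have "e ` {1..<n} \<subseteq> H" "e n \<in> H"
      using n e unfolding index_set_def bij_betw_def by (auto split: if_splits)
    then have S: "finite (A \<union> B)" "A \<union> B \<subseteq> zd_edges" and "e n \<in> zd_edges"
      using AB(1) assms(2) by auto
    moreover obtain u where "u \<in> e n" and "\<forall>m\<in>{1..<n}. u \<notin> e m"
      using fresh n by blast
    moreover from this have "\<forall>g\<in>A \<union> B. u \<notin> g"
      using AB(1) by auto
    ultimately show ?thesis
      using wusf_fresh_edge_given_cylinder_ge[OF assms(1) S AB(2)] by blast
  qed
  with e show ?thesis
    unfolding index_set_def by blast
qed

end
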